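(* Let $G$ be a simple directed graph with asymmetric adjacency matrix $A$ having an exact D-IPS with two compressed nodes. Then the singular value decomposition of $A$ has a unique leading left singular vector $v$ and a unique leading right singular vector $w$ with $v,w\ge 0$ (entrywise), and the positive parts of $v$ and $w$ (the sets of indices with positive entries) identify the two compressed nodes.
   Context: A simple directed graph has no self-loops and no multiple edges. Its asymmetric adjacency matrix $A$ has $A_{ij}=1$ if there is a directed edge from $x_i$ to $x_j$ and $A_{ij}=0$ otherwise. A summarization of size $k$ consists of a surjective map $\phi$ from the vertex set onto $k$ compressed nodes $c_1,\dots,c_k$ (the sets $C_I=\phi^{-1}(c_I)$ partition the vertices) together with a simple directed summarized graph on $\{c_1,\dots,c_k\}$ described by compressed relation values $r_{IJ}$ with $r_{II}=0$ and $r_{IJ}r_{JI}=0$. The graph has an exact Directions Influence Preserving Structure (exact D-IPS) with $k$ compressed nodes if there is such a summarization with $\mathrm{sign}(A_{ij})=\mathrm{sign}(r_{IJ})$ for all $i\neq j$, $x_i\in C_I$, $x_j\in C_J$, where $\mathrm{sign}(0)=0$ differs from the sign of any nonzero number. *)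

theory Defs
  imports "HOL-Analysis.Analysis"
begin

text \<open>A simple directed graph on the finite vertex type 'n, given by its
(asymmetric, i.e. not necessarily symmetric) adjacency matrix A:
A i j = 1 iff there is an edge from x_i to x_j; no self-loops.\<close>
definition simple_digraph_adj :: "real^'n^'n \<Rightarrow> bool" where
  "simple_digraph_adj A \<longleftrightarrow>
     (\<forall>i j. A$i$j = 0 \<or> A$i$j = 1) \<and> (\<forall>i. A$i$i = 0)"

text \<open>A summarization of size k with compressed nodes c_0..c_(k-1) (indexed by
naturals < k): a surjective map phi onto the compressed nodes and compressed relation
values r forming a simple directed summarized graph, such that the signs of the
adjacency entries agree with the signs of the compressed relation values.\<close>
definition exact_DIPS_summary ::
  "real^'n^'n \<Rightarrow> nat \<Rightarrow> ('n \<Rightarrow> nat) \<Rightarrow> (nat \<Rightarrow> nat \<Rightarrow> real) \<Rightarrow> bool" where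
  "exact_DIPS_summary A k phi r \<longleftrightarrow>
     phi ` UNIV = {..<k} \<and>
     (\<forall>I<k. r I I = 0) \<and>
     (\<forall>I<k. \<forall>J<k. r I J * r J I = 0) \<and>
     (\<forall>i j. i \<noteq> j \<longrightarrow> sgn (A$i$j) = sgn (r (phi i) (phi j)))"

definition has_exact_DIPS :: "real^'n^'n \<Rightarrow> nat \<Rightarrow> bool" where
  "has_exact_DIPS A k \<longleftrightarrow> (\<exists>phi r. exact_DIPS_summary A k phi r)"

definition singular_triple :: "real^'n^'m \<Rightarrow> real \<Rightarrow> real^'m \<Rightarrow> real^'n \<Rightarrow> bool" where
  "singular_triple A \<sigma> u w \<longleftrightarrow>
     \<sigma> \<ge> 0 \<and> norm u = 1 \<and> norm w = 1 \<and>
     A *v w = \<sigma> *\<^sub>R u \<and> transpose A *v u = \<sigma> *\<^sub>R w"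

definition leading_singular_triple :: "real^'n^'m \<Rightarrow> real \<Rightarrow> real^'m \<Rightarrow> real^'n \<Rightarrow> bool" where
  "leading_singular_triple A \<sigma> u w \<longleftrightarrow>
     singular_triple A \<sigma> u w \<and> (\<forall>\<sigma>' u' w'. singular_triple A \<sigma>' u' w' \<longrightarrow> \<sigma>' \<le> \<sigma>)"

definition leading_left_singular_vector :: "real^'n^'m \<Rightarrow> real^'m \<Rightarrow> bool" where
  "leading_left_singular_vector A u \<longleftrightarrow> (\<exists>\<sigma> w. leading_singular_triple A \<sigma> u w)"

definition leading_right_singular_vector :: "real^'n^'m \<Rightarrow> real^'n \<Rightarrow> bool" where
  "leading_right_singular_vector A w \<longleftrightarrow> (\<exists>\<sigma> u. leading_singular_triple A \<sigma> u w)"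

definition nonneg_vec :: "real^'n \<Rightarrow> bool" where
  "nonneg_vec v \<longleftrightarrow> (\<forall>i. v$i \<ge> 0)"

definition pos_part :: "real^'n \<Rightarrow> 'n set" where
  "pos_part v = {i. v$i > 0}"

end

theory Submission
  imports Defs
begin

text \<open>With two compressed nodes and no self-loops on them, the summarized graph has at most
one edge, say from c_I to c_J; exactness then forces every vertex of C_I to point to every
vertex of C_J and nothing else. Hence A is the rank-one matrix a b^T of the indicator vectors
a, b of C_I, C_J. By Cauchy-Schwarz every singular value of a b^T is at most norm a * norm b,
this value is attained by (a / norm a, b / norm b), and any singular vectors for it are
multiples of a and b, hence equal to plus or minus a / norm a and b / norm b. Nonnegativity
selects the plus sign, and the positive parts are C_I and C_J.\<close>

definition outer_prod :: "real^'m \<Rightarrow> real^'n \<Rightarrow> real^'n^'m" where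
  "outer_prod a b = (\<chi> i j. a$i * b$j)"

lemma outer_prod_mult_vec: "outer_prod a b *v w = (b \<bullet> w) *\<^sub>R a"
  by (auto simp: vec_eq_iff outer_prod_def matrix_vector_mult_def inner_vec_def
      sum_distrib_left mult_ac)

lemma transpose_outer_prod: "transpose (outer_prod a b) = outer_prod b a"
  by (simp add: vec_eq_iff outer_prod_def transpose_def)

lemma singular_triple_transpose:
  "singular_triple (transpose A) \<sigma> w u \<longleftrightarrow> singular_triple A \<sigma> u w"
  by (auto simp: singular_triple_def)

lemma leading_singular_triple_transpose:
  "leading_singular_triple (transpose A) \<sigma> w u \<longleftrightarrow> leading_singular_triple A \<sigma> u w"
  by (auto simp: leading_singular_triple_def singular_triple_transpose)

lemma leading_right_singular_vector_transpose:
  "leading_right_singular_vector A w \<longleftrightarrow> leading_left_singular_vector (transpose A) w"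
  by (auto simp: leading_right_singular_vector_def leading_left_singular_vector_def
      leading_singular_triple_transpose)

lemma singular_value_outer_prod_le:
  assumes "singular_triple (outer_prod a b) \<sigma> u w"
  shows "\<sigma> \<le> norm a * norm b"
proof -
  have eq: "\<sigma> *\<^sub>R u = (b \<bullet> w) *\<^sub>R a" and "norm u = 1" "norm w = 1"
    using assms by (auto simp: singular_triple_def outer_prod_mult_vec)
  from \<open>norm u = 1\<close> have "\<sigma> = u \<bullet> (\<sigma> *\<^sub>R u)"
    by (simp add: dot_square_norm)
  also have "\<dots> = u \<bullet> ((b \<bullet> w) *\<^sub>R a)"
    by (simp only: eq)
  also have "\<dots> = (b \<bullet> w) * (u \<bullet> a)"
    by simp
  also have "\<dots> \<le> \<bar>b \<bullet> w\<bar> * \<bar>u \<bullet> a\<bar>"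
    by (simp add: abs_mult[symmetric])
  also have "\<dots> \<le> norm b * norm a"
    using Cauchy_Schwarz_ineq2[of b w] Cauchy_Schwarz_ineq2[of u a] \<open>norm u = 1\<close> \<open>norm w = 1\<close>
    by (simp add: mult_mono')
  finally show ?thesis
    by (simp add: mult.commute)
qed

lemma singular_triple_outer_prod:
  assumes "a \<noteq> 0" "b \<noteq> 0"
  shows "singular_triple (outer_prod a b) (norm a * norm b) (sgn a) (sgn b)"
  using assms
  by (simp add: singular_triple_def outer_prod_mult_vec transpose_outer_prod sgn_div_norm
      norm_sgn dot_square_norm power2_eq_square)

lemma leading_singular_triple_outer_prod:
  assumes "a \<noteq> 0" "b \<noteq> 0"
  shows "leading_singular_triple (outer_prod a b) (norm a * norm b) (sgn a) (sgn b)"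
  using assms singular_triple_outer_prod singular_value_outer_prod_le
  by (auto simp: leading_singular_triple_def)

lemma leading_left_singular_vector_outer_prod:
  assumes "a \<noteq> 0" "b \<noteq> 0" and "leading_left_singular_vector (outer_prod a b) u"
  shows "u = sgn a \<or> u = - sgn a"
proof -
  obtain \<sigma> w where lead: "leading_singular_triple (outer_prod a b) \<sigma> u w"
    using assms(3) by (auto simp: leading_left_singular_vector_def)
  then have "\<sigma> = norm a * norm b"
    using leading_singular_triple_outer_prod[OF assms(1,2)] singular_value_outer_prod_le
    by (meson leading_singular_triple_def order_antisym)
  then have "\<sigma> > 0"
    using assms(1,2) by simp
  have eq: "\<sigma> *\<^sub>R u = (b \<bullet> w) *\<^sub>R a" and "norm u = 1"
    using lead by (auto simp: leading_singular_triple_def singular_triple_def outer_prod_mult_vec)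
  have "u = inverse \<sigma> *\<^sub>R (\<sigma> *\<^sub>R u)"
    using \<open>\<sigma> > 0\<close> by simp
  then have "u = (inverse \<sigma> * (b \<bullet> w)) *\<^sub>R a"
    unfolding eq by simp
  then obtain c where u: "u = c *\<^sub>R a"
    by blast
  then have "\<bar>c\<bar> * norm a = 1"
    using \<open>norm u = 1\<close> by simp
  then have "\<bar>c\<bar> = inverse (norm a)"
    using assms(1) by (simp add: field_simps)
  then have "c = inverse (norm a) \<or> c = - inverse (norm a)"
    by (auto simp: abs_if split: if_splits)
  then show ?thesis
    using u by (auto simp: sgn_div_norm)
qed

lemma not_nonneg_vec_minus_sgn:
  assumes "nonneg_vec a" "a \<noteq> 0"
  shows "\<not> nonneg_vec (- sgn a)"
proof
  obtain i where "a$i \<noteq> 0"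
    using assms(2) by (auto simp: vec_eq_iff)
  then have "a$i > 0"
    using assms(1) by (simp add: nonneg_vec_def order_less_le)
  moreover assume "nonneg_vec (- sgn a)"
  then have "- (a$i / norm a) \<ge> 0"
    by (auto simp: nonneg_vec_def sgn_div_norm divide_inverse_commute)
  ultimately show False
    using assms(2) by (simp add: divide_le_0_iff)
qed

lemma nonneg_vec_sgn: "nonneg_vec a \<Longrightarrow> nonneg_vec (sgn a)"
  by (simp add: nonneg_vec_def sgn_div_norm)

lemma pos_part_sgn: "pos_part (sgn a) = pos_part a"
  by (cases "a = 0") (auto simp: pos_part_def sgn_div_norm zero_less_mult_iff)

lemma nonneg_leading_left_singular_vector_outer_prod_iff:
  assumes "nonneg_vec a" "a \<noteq> 0" "b \<noteq> 0"
  shows "leading_left_singular_vector (outer_prod a b) u \<and> nonneg_vec u \<longleftrightarrow> u = sgn a"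
proof
  assume "leading_left_singular_vector (outer_prod a b) u \<and> nonneg_vec u"
  then show "u = sgn a"
    using assms leading_left_singular_vector_outer_prod not_nonneg_vec_minus_sgn by blast
next
  assume "u = sgn a"
  then show "leading_left_singular_vector (outer_prod a b) u \<and> nonneg_vec u"
    using leading_singular_triple_outer_prod[OF assms(2,3)] nonneg_vec_sgn[OF assms(1)]
    by (auto simp: leading_left_singular_vector_def)
qed

lemma nonneg_leading_right_singular_vector_outer_prod_iff:
  assumes "nonneg_vec b" "a \<noteq> 0" "b \<noteq> 0"
  shows "leading_right_singular_vector (outer_prod a b) w \<and> nonneg_vec w \<longleftrightarrow> w = sgn b"
  using nonneg_leading_left_singular_vector_outer_prod_iff[OF assms(1,3,2)]
  by (simp add: leading_right_singular_vector_transpose transpose_outer_prod)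

definition class_indicator :: "('n \<Rightarrow> nat) \<Rightarrow> nat \<Rightarrow> real^'n" where
  "class_indicator phi I = (\<chi> i. if phi i = I then 1 else 0)"

lemma nonneg_vec_class_indicator: "nonneg_vec (class_indicator phi I)"
  by (simp add: nonneg_vec_def class_indicator_def)

lemma pos_part_class_indicator: "pos_part (class_indicator phi I) = {i. phi i = I}"
  by (simp add: pos_part_def class_indicator_def)

lemma class_indicator_nonzero: "I \<in> range phi \<Longrightarrow> class_indicator phi I \<noteq> 0"
  by (auto simp: class_indicator_def vec_eq_iff)

lemma exact_DIPS_adj_entry:
  assumes "simple_digraph_adj A" "exact_DIPS_summary A k phi r"
  shows "A$i$j = (if r (phi i) (phi j) = 0 then 0 else 1)"
proof (cases "i = j")
  case True
  have "phi j < k"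
    using assms(2) by (auto simp: exact_DIPS_summary_def)
  then show ?thesis
    using True assms by (auto simp: simple_digraph_adj_def exact_DIPS_summary_def)
next
  case False
  then have "sgn (A$i$j) = sgn (r (phi i) (phi j))"
    using assms(2) by (simp add: exact_DIPS_summary_def)
  moreover have "A$i$j = 0 \<or> A$i$j = 1"
    using assms(1) by (simp add: simple_digraph_adj_def)
  ultimately show ?thesis
    by (auto simp: sgn_eq_0_iff)
qed

lemma exact_DIPS_2_outer_prod:
  assumes "simple_digraph_adj A" "exact_DIPS_summary A 2 phi r" "A \<noteq> 0"
  obtains I J where "{I, J} = {0, 1 :: nat}"
    and "A = outer_prod (class_indicator phi I) (class_indicator phi J)"
proof -
  have phi: "phi i \<in> {0, 1}" for i
    using assms(2) by (auto simp: exact_DIPS_summary_def less_2_cases_iff)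
  have loops: "r 0 0 = 0" "r 1 1 = 0" and one_way: "r 0 1 * r 1 0 = 0"
    using assms(2) by (auto simp: exact_DIPS_summary_def)
  have entry: "A$i$j = (if r (phi i) (phi j) = 0 then 0 else 1)" for i j
    using exact_DIPS_adj_entry[OF assms(1,2)] .
  have outer: "A = outer_prod (class_indicator phi I) (class_indicator phi J)"
    if IJ: "{I, J} = {0, 1}" and "r I J \<noteq> 0" "r J I = 0" for I J
  proof -
    have edge: "r K L \<noteq> 0 \<longleftrightarrow> K = I \<and> L = J" if "K \<in> {0, 1}" "L \<in> {0, 1}" for K L
      using that IJ \<open>r I J \<noteq> 0\<close> \<open>r J I = 0\<close> loops by (auto simp: doubleton_eq_iff)
    have "A$i$j = class_indicator phi I $ i * class_indicator phi J $ j" for i j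
      using edge[OF phi[of i] phi[of j]] by (auto simp: entry class_indicator_def)
    then show ?thesis
      by (simp add: vec_eq_iff outer_prod_def)
  qed
  have "r 0 1 \<noteq> 0 \<or> r 1 0 \<noteq> 0"
  proof (rule ccontr)
    assume "\<not> ?thesis"
    then have "r K L = 0" if "K \<in> {0, 1}" "L \<in> {0, 1}" for K L
      using that loops by auto
    then have "A = 0"
      using phi by (simp add: vec_eq_iff entry)
    with assms(3) show False ..
  qed
  then show ?thesis
  proof
    assume "r 0 1 \<noteq> 0"
    then show ?thesis
      using outer[of 0 1] one_way by (intro that[of 0 1]) auto
  next
    assume "r 1 0 \<noteq> 0"
    then show ?thesis
      using outer[of 1 0] one_way by (intro that[of 1 0]) auto
  qed
qed

theorem theorem5:
  fixes A :: "real^'n^'n" and phi :: "'n \<Rightarrow> nat" and r :: "nat \<Rightarrow> nat \<Rightarrow> real"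
  assumes "simple_digraph_adj A"
    and "exact_DIPS_summary A 2 phi r"
    and "A \<noteq> 0"
  shows "\<exists>v w.
     (leading_left_singular_vector A v \<and> nonneg_vec v) \<and>
     (\<forall>v'. leading_left_singular_vector A v' \<and> nonneg_vec v' \<longrightarrow> v' = v) \<and>
     (leading_right_singular_vector A w \<and> nonneg_vec w) \<and>
     (\<forall>w'. leading_right_singular_vector A w' \<and> nonneg_vec w' \<longrightarrow> w' = w) \<and>
     {pos_part v, pos_part w} = {{i. phi i = 0}, {i. phi i = 1}}"
proof -
  obtain I J where IJ: "{I, J} = {0, 1 :: nat}"
    and A: "A = outer_prod (class_indicator phi I) (class_indicator phi J)"
    using exact_DIPS_2_outer_prod[OF assms] .
  have "range phi = {0, 1}"
    using assms(2) by (auto simp: exact_DIPS_summary_def lessThan_def less_2_cases_iff)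
  then have nonzero: "class_indicator phi I \<noteq> 0" "class_indicator phi J \<noteq> 0"
    using IJ class_indicator_nonzero by (metis insertI1 insertI2)+
  note left = nonneg_leading_left_singular_vector_outer_prod_iff
    [OF nonneg_vec_class_indicator nonzero]
  note right = nonneg_leading_right_singular_vector_outer_prod_iff
    [OF nonneg_vec_class_indicator nonzero]
  have "{pos_part (sgn (class_indicator phi I)), pos_part (sgn (class_indicator phi J))}
      = {{i. phi i = 0}, {i. phi i = 1}}"
    using IJ by (auto simp: pos_part_sgn pos_part_class_indicator doubleton_eq_iff)
  then show ?thesis
    unfolding A
    by (intro exI[of _ "sgn (class_indicator phi I)"] exI[of _ "sgn (class_indicator phi J)"])
      (simp add: left right)
qed

end
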